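(* For $p\in[0,1]$ let $M_7(p)$ be the $7\times 7$ row-stochastic matrix $$M_7(p)=\mathbb{I}_5\oplus\begin{pmatrix}p&1-p\\ \tfrac p3&1-\tfrac p3\end{pmatrix},$$ i.e. $[M_7(p)]_{ij}=\delta_{ij}$ for $i,j\le 5$, $[M_7(p)]_{66}=p$, $[M_7(p)]_{67}=1-p$, $[M_7(p)]_{76}=p/3$, $[M_7(p)]_{77}=1-p/3$, and all other entries $0$. Then $\operatorname{rank}_{\mathrm{psd}}(M_7(p))=7$ for every $p\in(0,1]$.
   Context: The psd rank of a nonnegative $n\times m$ matrix $M$, $\operatorname{rank}_{\mathrm{psd}}(M)$, is the smallest $r$ such that there exist $r\times r$ positive semidefinite matrices $R_1,\dots,R_n$ and $C_1,\dots,C_m$ with $M_{ij}=\operatorname{Tr}(R_iC_j)$ for all $i,j$. *)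

theory Defs
  imports Complex_Main
begin

text \<open>Matrices of varying size are represented as functions nat => nat => real,
  with only the entries with indices below the stated dimensions being relevant
  (indices are 0-based).\<close>

definition psd_mat :: "nat \<Rightarrow> (nat \<Rightarrow> nat \<Rightarrow> real) \<Rightarrow> bool" where
  "psd_mat r A \<longleftrightarrow>
     (\<forall>i<r. \<forall>j<r. A i j = A j i) \<and>
     (\<forall>x :: nat \<Rightarrow> real. 0 \<le> (\<Sum>i<r. \<Sum>j<r. x i * A i j * x j))"

definition mat_trace_prod :: "nat \<Rightarrow> (nat \<Rightarrow> nat \<Rightarrow> real) \<Rightarrow> (nat \<Rightarrow> nat \<Rightarrow> real) \<Rightarrow> real" where
  "mat_trace_prod r A B = (\<Sum>i<r. \<Sum>j<r. A i j * B j i)"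

definition psd_factorization :: "nat \<Rightarrow> nat \<Rightarrow> nat \<Rightarrow> (nat \<Rightarrow> nat \<Rightarrow> real) \<Rightarrow> bool" where
  "psd_factorization r n m M \<longleftrightarrow>
     (\<exists>R C :: nat \<Rightarrow> nat \<Rightarrow> nat \<Rightarrow> real.
        (\<forall>i<n. psd_mat r (R i)) \<and> (\<forall>j<m. psd_mat r (C j)) \<and>
        (\<forall>i<n. \<forall>j<m. M i j = mat_trace_prod r (R i) (C j)))"

definition psd_rank :: "nat \<Rightarrow> nat \<Rightarrow> (nat \<Rightarrow> nat \<Rightarrow> real) \<Rightarrow> nat" where
  "psd_rank n m M = (LEAST r. psd_factorization r n m M)"

definition M7 :: "real \<Rightarrow> nat \<Rightarrow> nat \<Rightarrow> real" where
  "M7 p i j =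
     (if i < 5 \<and> j < 5 then (if i = j then 1 else 0)
      else if i = 5 \<and> j = 5 then p
      else if i = 5 \<and> j = 6 then 1 - p
      else if i = 6 \<and> j = 5 then p / 3
      else if i = 6 \<and> j = 6 then 1 - p / 3
      else 0)"

end

theory Submission
  imports Defs "Jordan_Normal_Form.Determinant"
begin

(* The diagonal factorization R_i = diag(row i of M), C_j = diag(e_j) shows that the psd rank of
   a nonnegative matrix is at most its number of columns.

   For the lower bound, write every C_j as a sum of rank-one matrices g g^T, so that
   M_ij = sum over g of g^T R_i g. A zero entry M_ij forces R_i g = 0 for every such g, while a
   positive entry provides some g with g^T R_i g > 0. Choose such a g_i for each of the first five
   diagonal entries and, among the g coming from the last two columns, two non-parallel vectors
   w and v: if all of them were multiples of one vector, these columns would be proportional,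
   contradicting the nonsingularity of the lower-right 2x2 block. Pairing a linear relation
   among g_0, ..., g_4, w, v with g_i via R_i makes every coefficient vanish, so these seven
   vectors in R^r are linearly independent and r >= 7. *)

definition bilin_form :: "nat \<Rightarrow> (nat \<Rightarrow> nat \<Rightarrow> real) \<Rightarrow> (nat \<Rightarrow> real) \<Rightarrow> (nat \<Rightarrow> real) \<Rightarrow> real" where
  "bilin_form r A x y = (\<Sum>i<r. \<Sum>j<r. x i * A i j * y j)"

definition mat_vec :: "nat \<Rightarrow> (nat \<Rightarrow> nat \<Rightarrow> real) \<Rightarrow> (nat \<Rightarrow> real) \<Rightarrow> nat \<Rightarrow> real" where
  "mat_vec r A x i = (\<Sum>j<r. A i j * x j)"

lemma bilin_form_mat_vec: "bilin_form r A x y = (\<Sum>i<r. x i * mat_vec r A y i)"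
  by (simp add: bilin_form_def mat_vec_def sum_distrib_left mult.assoc)

lemma mat_vec_unit_vec: "a < r \<Longrightarrow> mat_vec r A (\<lambda>j. of_bool (j = a)) i = A i a"
  by (simp add: mat_vec_def)

lemma bilin_form_unit_vec:
  "a < r \<Longrightarrow> bilin_form r A (\<lambda>i. of_bool (i = a)) (\<lambda>i. of_bool (i = a)) = A a a"
  by (simp add: bilin_form_mat_vec mat_vec_unit_vec)

lemma bilin_form_add_smult:
  "bilin_form r A (\<lambda>i. x i + t * y i) (\<lambda>i. x i + t * y i)
   = bilin_form r A x x + t * (bilin_form r A x y + bilin_form r A y x) + t\<^sup>2 * bilin_form r A y y"
  by (simp add: bilin_form_def algebra_simps sum.distrib sum_distrib_left power2_eq_square)

lemma bilin_form_sum_right: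
  fixes n :: nat
  shows "bilin_form r A y (\<lambda>t. \<Sum>b<n. x b * V b t) = (\<Sum>b<n. x b * bilin_form r A y (V b))"
  by (simp add: bilin_form_def sum_distrib_left sum_distrib_right algebra_simps sum.swap[where A="{..<n}"])

lemma bilin_form_smult:
  assumes "\<forall>t<r. v t = c * w t"
  shows "bilin_form r A v v = c\<^sup>2 * bilin_form r A w w"
  unfolding bilin_form_def sum_distrib_left using assms
  by (intro sum.cong refl) (simp add: power2_eq_square algebra_simps)

lemma bilin_form_pos_imp_nonzero:
  assumes "0 < bilin_form r A x x"
  shows "\<exists>t<r. x t \<noteq> 0"
proof (rule ccontr)
  assume "\<not> (\<exists>t<r. x t \<noteq> 0)"
  then have "bilin_form r A x x = 0"
    by (simp add: bilin_form_def)
  with assms show False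
    by simp
qed

lemma psd_mat_bilin_form_nonneg: "psd_mat r A \<Longrightarrow> 0 \<le> bilin_form r A x x"
  by (simp add: psd_mat_def bilin_form_def)

lemma psd_mat_bilin_form_commute:
  assumes "psd_mat r A"
  shows "bilin_form r A x y = bilin_form r A y x"
proof -
  have "bilin_form r A x y = (\<Sum>i<r. \<Sum>j<r. y j * A j i * x i)"
    unfolding bilin_form_def using assms by (intro sum.cong refl) (simp add: psd_mat_def)
  also have "\<dots> = bilin_form r A y x"
    unfolding bilin_form_def by (rule sum.swap)
  finally show ?thesis .
qed

lemma psd_mat_diag_nonneg: "psd_mat r A \<Longrightarrow> a < r \<Longrightarrow> 0 \<le> A a a"
  using psd_mat_bilin_form_nonneg bilin_form_unit_vec by metis

lemma psd_mat_mono: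
  assumes A: "psd_mat s A" and "r \<le> s"
  shows "psd_mat r A"
  unfolding psd_mat_def
proof (intro conjI allI impI)
  fix i j assume "i < r" "j < r"
  then show "A i j = A j i" using A \<open>r \<le> s\<close> by (simp add: psd_mat_def)
next
  fix x :: "nat \<Rightarrow> real"
  define y where "y i = (if i < r then x i else 0)" for i
  have "bilin_form s A y y = bilin_form r A x x"
    unfolding bilin_form_def using \<open>r \<le> s\<close>
    by (intro sum.mono_neutral_cong_right) (auto simp: y_def intro!: sum.mono_neutral_cong_right)
  then show "0 \<le> (\<Sum>i<r. \<Sum>j<r. x i * A i j * x j)"
    using psd_mat_bilin_form_nonneg[OF A, of y] by (simp add: bilin_form_def)
qed

lemma nonneg_quadratic_linear_coeff_zero:
  fixes b c :: real
  assumes "\<forall>t. 0 \<le> b * t + c * t\<^sup>2"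
  shows "b = 0"
proof (rule ccontr)
  assume "b \<noteq> 0"
  define d where "d = \<bar>c\<bar> + 1"
  have "0 < d" "c / d < 1"
    unfolding d_def using abs_ge_zero[of c] abs_ge_self[of c] by (auto simp: divide_less_eq)
  define t where "t = - b / d"
  have "b * t + c * t\<^sup>2 = b\<^sup>2 / d * (c / d - 1)"
    using \<open>0 < d\<close> by (simp add: t_def field_simps power2_eq_square)
  also have "\<dots> < 0"
    using \<open>b \<noteq> 0\<close> \<open>0 < d\<close> \<open>c / d < 1\<close> by (intro mult_pos_neg) auto
  finally show False using assms by (metis not_le)
qed

lemma psd_mat_quad_zero_imp_mat_vec_zero:
  assumes A: "psd_mat r A" and x: "bilin_form r A x x = 0" and "a < r"
  shows "mat_vec r A x a = 0"
proof -
  define z where "z = mat_vec r A x"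
  have zx: "bilin_form r A z x = (\<Sum>i<r. (z i)\<^sup>2)"
    by (simp add: bilin_form_mat_vec z_def power2_eq_square)
  have "0 \<le> (2 * (\<Sum>i<r. (z i)\<^sup>2)) * t + bilin_form r A z z * t\<^sup>2" for t
    using psd_mat_bilin_form_nonneg[OF A, of "\<lambda>i. x i + t * z i"]
    by (simp add: bilin_form_add_smult x zx psd_mat_bilin_form_commute[OF A, of x z] algebra_simps)
  then have "2 * (\<Sum>i<r. (z i)\<^sup>2) = 0"
    by (intro nonneg_quadratic_linear_coeff_zero allI)
  then show ?thesis
    using \<open>a < r\<close> by (simp add: z_def sum_nonneg_eq_0_iff)
qed

lemma psd_mat_sum_quad_zero_imp_mat_vec_zero:
  fixes K :: nat
  assumes A: "psd_mat r A" and "(\<Sum>l<K. bilin_form r A (G l) (G l)) = 0" and "l < K" "t < r"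
  shows "mat_vec r A (G l) t = 0"
proof -
  have "bilin_form r A (G l) (G l) = 0"
    using assms(2,3) psd_mat_bilin_form_nonneg[OF A] by (subst (asm) sum_nonneg_eq_0_iff) auto
  then show ?thesis
    using psd_mat_quad_zero_imp_mat_vec_zero[OF A _ \<open>t < r\<close>] by simp
qed

lemma psd_mat_zero_diag_imp_zero:
  assumes A: "psd_mat r A" and "a < r" "A a a = 0" "j < r"
  shows "A j a = 0" and "A a j = 0"
proof -
  show "A j a = 0"
    using psd_mat_quad_zero_imp_mat_vec_zero[OF A _ \<open>j < r\<close>, of "\<lambda>i. of_bool (i = a)"] assms
    by (simp add: bilin_form_unit_vec mat_vec_unit_vec)
  then show "A a j = 0"
    using A assms by (simp add: psd_mat_def)
qed

lemma psd_mat_schur_complement: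
  assumes A: "psd_mat r A" and "a < r" and pivot: "0 < A a a"
  shows "psd_mat r (\<lambda>i j. A i j - A i a * A j a / A a a)"
  unfolding psd_mat_def
proof (intro conjI allI impI)
  fix i j assume "i < r" "j < r"
  then show "A i j - A i a * A j a / A a a = A j i - A j a * A i a / A a a"
    using A by (simp add: psd_mat_def)
next
  fix x :: "nat \<Rightarrow> real"
  define e :: "nat \<Rightarrow> real" where "e = (\<lambda>i. of_bool (i = a))"
  define s where "s = (\<Sum>i<r. x i * A i a)"
  have xe: "bilin_form r A x e = s"
    using \<open>a < r\<close> by (simp add: bilin_form_mat_vec e_def mat_vec_unit_vec s_def)
  have ee: "bilin_form r A e e = A a a"
    using \<open>a < r\<close> by (simp add: e_def bilin_form_unit_vec)
  define t where "t = - s / A a a"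
  have "0 \<le> bilin_form r A (\<lambda>i. x i + t * e i) (\<lambda>i. x i + t * e i)"
    using psd_mat_bilin_form_nonneg[OF A] .
  also have "\<dots> = bilin_form r A x x + t * (2 * s) + t\<^sup>2 * A a a"
    unfolding bilin_form_add_smult psd_mat_bilin_form_commute[OF A, of e x] xe ee by simp
  also have "\<dots> = bilin_form r A x x - s * s / A a a"
    using pivot by (simp add: t_def field_simps power2_eq_square)
  also have "\<dots> = (\<Sum>i<r. \<Sum>j<r. x i * (A i j - A i a * A j a / A a a) * x j)"
    unfolding bilin_form_def s_def sum_product sum_divide_distrib sum_subtractf[symmetric]
    by (intro sum.cong refl) (simp add: algebra_simps)
  finally show "0 \<le> (\<Sum>i<r. \<Sum>j<r. x i * (A i j - A i a * A j a / A a a) * x j)" .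
qed

definition diag_mat :: "(nat \<Rightarrow> real) \<Rightarrow> nat \<Rightarrow> nat \<Rightarrow> real" where
  "diag_mat d i j = of_bool (i = j) * d i"

lemma psd_mat_diag_mat:
  assumes "\<forall>i<r. 0 \<le> d i"
  shows "psd_mat r (diag_mat d)"
  unfolding psd_mat_def
proof (intro conjI allI impI)
  fix i j
  show "diag_mat d i j = diag_mat d j i"
    by (simp add: diag_mat_def)
next
  fix x :: "nat \<Rightarrow> real"
  have "(\<Sum>i<r. \<Sum>j<r. x i * diag_mat d i j * x j) = (\<Sum>i<r. d i * (x i)\<^sup>2)"
    by (simp add: diag_mat_def power2_eq_square mult.assoc
        mult.commute[of _ "of_bool _"] mult.left_commute[of _ "of_bool _"]) (simp add: ac_simps)
  also have "\<dots> \<ge> 0"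
    using assms by (auto intro!: sum_nonneg)
  finally show "0 \<le> (\<Sum>i<r. \<Sum>j<r. x i * diag_mat d i j * x j)" .
qed

lemma mat_trace_prod_diag_mat:
  "mat_trace_prod r (diag_mat d) (diag_mat e) = (\<Sum>i<r. d i * e i)"
  by (simp add: mat_trace_prod_def diag_mat_def
      mult.commute[of _ "of_bool _"] mult.left_commute[of _ "of_bool _"])

lemma psd_factorization_of_nonneg:
  assumes "\<forall>i<n. \<forall>j<m. 0 \<le> M i j"
  shows "psd_factorization m n m M"
  unfolding psd_factorization_def
proof (intro exI conjI allI impI)
  fix i assume "i < n"
  then show "psd_mat m (diag_mat (M i))"
    using assms by (intro psd_mat_diag_mat) auto
next
  fix j :: nat
  show "psd_mat m (diag_mat (\<lambda>a. of_bool (a = j)))"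
    by (intro psd_mat_diag_mat) auto
next
  fix i j assume "i < n" "j < m"
  then show "M i j = mat_trace_prod m (diag_mat (M i)) (diag_mat (\<lambda>a. of_bool (a = j)))"
    by (simp add: mat_trace_prod_diag_mat)
qed

lemma psd_mat_split_rank_one:
  assumes A: "psd_mat r A" and "a < r"
  obtains g where "psd_mat r (\<lambda>i j. A i j - g i * g j)"
    and "\<forall>i<r. A i a - g i * g a = 0 \<and> A a i - g a * g i = 0"
proof
  have "0 \<le> A a a"
    using psd_mat_diag_nonneg[OF A \<open>a < r\<close>] .
  \<comment> \<open>if A a a = 0, then g = 0, as division by zero yields 0\<close>
  define g where "g i = A i a / sqrt (A a a)" for i
  have g: "g i * g j = A i a * A j a / A a a" for i j
    using \<open>0 \<le> A a a\<close> by (simp add: g_def flip: times_divide_times_eq)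
  show A': "psd_mat r (\<lambda>i j. A i j - g i * g j)"
  proof (cases "A a a = 0")
    case True
    then show ?thesis using A by (simp add: g)
  next
    case False
    then show ?thesis
      using psd_mat_schur_complement[OF A \<open>a < r\<close>] \<open>0 \<le> A a a\<close> by (simp add: g)
  qed
  have "A a a - g a * g a = 0"
    unfolding g by (cases "A a a = 0") simp_all
  then show "\<forall>i<r. A i a - g i * g a = 0 \<and> A a i - g a * g i = 0"
    using psd_mat_zero_diag_imp_zero[OF A' \<open>a < r\<close>] by blast
qed

lemma psd_mat_gram:
  assumes "psd_mat r A"
  shows "\<exists>(K :: nat) G. \<forall>i<r. \<forall>j<r. A i j = (\<Sum>k<K. G k i * G k j)"
  using assms
proof (induction r arbitrary: A)
  case 0
  then show ?case by auto
next
  case (Suc r)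
  obtain g where A': "psd_mat (Suc r) (\<lambda>i j. A i j - g i * g j)"
    and A'_r: "\<forall>i<Suc r. A i r - g i * g r = 0 \<and> A r i - g r * g i = 0"
    using psd_mat_split_rank_one[OF Suc.prems lessI] .
  obtain K :: nat and G where G: "\<forall>i<r. \<forall>j<r. A i j - g i * g j = (\<Sum>k<K. G k i * G k j)"
    using Suc.IH[OF psd_mat_mono[OF A']] by auto
  define G' where "G' k i = (if k < K then if i < r then G k i else 0 else g i)" for k i
  show ?case
  proof (intro exI[of _ "Suc K"] exI[of _ G'] allI impI)
    fix i j assume ij: "i < Suc r" "j < Suc r"
    have "(\<Sum>k<K. G' k i * G' k j) = A i j - g i * g j"
    proof (cases "i = r \<or> j = r")
      case True
      then show ?thesis using A'_r ij by (auto simp: G'_def)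
    next
      case False
      then show ?thesis using G ij by (simp add: G'_def)
    qed
    moreover have "G' K i * G' K j = g i * g j"
      by (simp add: G'_def)
    ultimately show "A i j = (\<Sum>k<Suc K. G' k i * G' k j)"
      by simp
  qed
qed

lemma mat_trace_prod_gram:
  assumes "\<forall>i<r. \<forall>j<r. C i j = (\<Sum>k<K. G k i * G k j)"
  shows "mat_trace_prod r R C = (\<Sum>k<K. bilin_form r R (G k) (G k))"
proof -
  have "mat_trace_prod r R C = (\<Sum>a<r. \<Sum>b<r. \<Sum>k<K. G k a * R a b * G k b)"
    unfolding mat_trace_prod_def using assms
    by (intro sum.cong refl) (simp add: sum_distrib_left algebra_simps)
  also have "\<dots> = (\<Sum>k<K. bilin_form r R (G k) (G k))"
    unfolding bilin_form_def by (simp add: sum.swap[where A="{..<K}"])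
  finally show ?thesis .
qed

lemma psd_factorization_rank_oneE:
  assumes "psd_factorization r n m M"
  obtains R :: "nat \<Rightarrow> nat \<Rightarrow> nat \<Rightarrow> real" and K :: "nat \<Rightarrow> nat" and G :: "nat \<Rightarrow> nat \<Rightarrow> nat \<Rightarrow> real"
  where "\<forall>i<n. psd_mat r (R i)"
    and "\<forall>i<n. \<forall>j<m. M i j = (\<Sum>k<K j. bilin_form r (R i) (G j k) (G j k))"
proof -
  obtain R C where R: "\<forall>i<n. psd_mat r (R i)" and C: "\<forall>j<m. psd_mat r (C j)"
    and M: "\<forall>i<n. \<forall>j<m. M i j = mat_trace_prod r (R i) (C j)"
    using assms unfolding psd_factorization_def by blast
  have "\<forall>j<m. \<exists>(K :: nat) G. \<forall>a<r. \<forall>b<r. C j a b = (\<Sum>k<K. G k a * G k b)"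
    using psd_mat_gram C by blast
  then obtain K :: "nat \<Rightarrow> nat" and G
    where G: "\<forall>j<m. \<forall>a<r. \<forall>b<r. C j a b = (\<Sum>k<K j. G j k a * G j k b)"
    by metis
  show thesis
  proof
    show "\<forall>i<n. psd_mat r (R i)" by (fact R)
    show "\<forall>i<n. \<forall>j<m. M i j = (\<Sum>k<K j. bilin_form r (R i) (G j k) (G j k))"
      using M G by (simp add: mat_trace_prod_gram)
  qed
qed

lemma sum_rank_one_parallel:
  fixes K :: nat
  assumes "\<forall>k<K. \<forall>t<r. G k t = c k * w t"
  shows "(\<Sum>k<K. bilin_form r A (G k) (G k)) = (\<Sum>k<K. (c k)\<^sup>2) * bilin_form r A w w"
  unfolding sum_distrib_right using assms by (intro sum.cong refl bilin_form_smult) auto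

lemma rank_one_columns_not_parallelE:
  fixes K :: "nat \<Rightarrow> nat"
  assumes M: "\<forall>h\<in>{i, i'}. \<forall>q\<in>{j, j'}. M h q = (\<Sum>k<K q. bilin_form r (R h) (G q k) (G q k))"
    and nonsing: "M i j * M i' j' \<noteq> M i j' * M i' j"
  obtains q k where "q \<in> {j, j'}" "k < K q" "\<not> (\<exists>c. \<forall>t<r. G q k t = c * w t)"
proof -
  have "\<exists>q\<in>{j, j'}. \<exists>k<K q. \<not> (\<exists>c. \<forall>t<r. G q k t = c * w t)"
  proof (rule ccontr)
    assume "\<not> ?thesis"
    then have parallel: "\<exists>c. \<forall>t<r. G q k t = c * w t" if "q \<in> {j, j'}" "k < K q" for q k
      using that by blast
    define c where "c q k = (SOME c. \<forall>t<r. G q k t = c * w t)" for q k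
    have c: "\<forall>t<r. G q k t = c q k * w t" if "q \<in> {j, j'}" "k < K q" for q k
      unfolding c_def using someI_ex[OF parallel[OF that]] .
    have "M h q = (\<Sum>k<K q. (c q k)\<^sup>2) * bilin_form r (R h) w w"
      if "h \<in> {i, i'}" "q \<in> {j, j'}" for h q
    proof -
      have "M h q = (\<Sum>k<K q. bilin_form r (R h) (G q k) (G q k))"
        using M that by blast
      also have "\<dots> = (\<Sum>k<K q. (c q k)\<^sup>2) * bilin_form r (R h) w w"
        using c that(2) by (intro sum_rank_one_parallel) blast
      finally show ?thesis .
    qed
    then show False
      using nonsing by (simp add: ac_simps)
  qed
  then show thesis
    using that by blast
qed

lemma homogeneous_system_nontrivial_solutionE:
  fixes f :: "nat \<Rightarrow> nat \<Rightarrow> real"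
  assumes "r < n"
  obtains x where "\<exists>b<n. x b \<noteq> 0" and "\<forall>a<r. (\<Sum>b<n. x b * f b a) = 0"
proof -
  \<comment> \<open>the equations as the first rows of a square matrix whose last row is zero\<close>
  define A :: "real mat"
    where "A = mat\<^sub>r n n (\<lambda>a. if a = n - 1 then 0\<^sub>v n else vec n (\<lambda>b. f b a))"
  have A: "A \<in> carrier_mat n n"
    by (simp add: A_def)
  have "det A = 0"
    unfolding A_def using assms by (intro det_row_0) auto
  then obtain v where v: "v \<in> carrier_vec n" "v \<noteq> 0\<^sub>v n" "A *\<^sub>v v = 0\<^sub>v n"
    using det_0_iff_vec_prod_zero[OF A] by auto
  show thesis
  proof
    show "\<exists>b<n. v $ b \<noteq> 0"
      using v(1,2) by (metis eq_vecI index_zero_vec carrier_vecD)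
    show "\<forall>a<r. (\<Sum>b<n. v $ b * f b a) = 0"
    proof (intro allI impI)
      fix a assume "a < r"
      then have "(A *\<^sub>v v) $ a = (\<Sum>b<n. v $ b * f b a)"
        using assms v(1) by (simp add: A_def scalar_prod_def lessThan_atLeast0 mult.commute)
      then show "(\<Sum>b<n. v $ b * f b a) = 0"
        using v(3) \<open>a < r\<close> assms by simp
    qed
  qed
qed

lemma coeff_zero_if_not_parallel:
  fixes v w :: "nat \<Rightarrow> real"
  assumes w: "\<exists>t<r. w t \<noteq> 0" and v: "\<not> (\<exists>c. \<forall>t<r. v t = c * w t)"
    and rel: "\<forall>t<r. a * w t + b * v t = 0"
  shows "a = 0" and "b = 0"
proof -
  show "b = 0"
  proof (rule ccontr)
    assume "b \<noteq> 0"
    then have "\<forall>t<r. v t = (- a / b) * w t"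
      using rel by (auto simp: field_simps add_eq_0_iff)
    with v show False by blast
  qed
  then show "a = 0"
    using w rel by auto
qed

lemma coeff_zero_if_diag_witness:
  fixes n :: nat
  assumes pos: "0 < bilin_form r A (V i) (V i)"
    and annihilate: "\<forall>b<n. b \<noteq> i \<longrightarrow> (\<forall>t<r. mat_vec r A (V b) t = 0)"
    and rel: "\<forall>t<r. (\<Sum>b<n. x b * V b t) = 0"
    and "i < n"
  shows "x i = 0"
proof -
  have "0 = bilin_form r A (V i) (\<lambda>t. \<Sum>b<n. x b * V b t)"
    using rel by (simp add: bilin_form_def)
  also have "\<dots> = (\<Sum>b<n. x b * bilin_form r A (V i) (V b))"
    by (rule bilin_form_sum_right)
  also have "\<dots> = x i * bilin_form r A (V i) (V i)
      + (\<Sum>b\<in>{..<n} - {i}. x b * bilin_form r A (V i) (V b))"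
    using \<open>i < n\<close> by (subst sum.remove[of _ i]) auto
  also have "(\<Sum>b\<in>{..<n} - {i}. x b * bilin_form r A (V i) (V b)) = 0"
    using annihilate by (intro sum.neutral) (simp add: bilin_form_mat_vec)
  finally show ?thesis
    using pos by simp
qed

lemma independent_witnesses_dim_ge:
  fixes V :: "nat \<Rightarrow> nat \<Rightarrow> real"
  assumes pos: "\<forall>i<k. 0 < bilin_form r (R i) (V i) (V i)"
    and annihilate: "\<forall>i<k. \<forall>b<k + 2. b \<noteq> i \<longrightarrow> (\<forall>t<r. mat_vec r (R i) (V b) t = 0)"
    and nonzero: "\<exists>t<r. V k t \<noteq> 0"
    and not_parallel: "\<not> (\<exists>c. \<forall>t<r. V (k + 1) t = c * V k t)"
  shows "k + 2 \<le> r"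
proof (rule ccontr)
  assume "\<not> k + 2 \<le> r"
  then have "r < k + 2"
    by simp
  then obtain x where x: "\<exists>b<k + 2. x b \<noteq> 0" and rel: "\<forall>t<r. (\<Sum>b<k + 2. x b * V b t) = 0"
    by (rule homogeneous_system_nontrivial_solutionE)
  have x_diag: "x i = 0" if "i < k" for i
    using pos annihilate that by (intro coeff_zero_if_diag_witness[where A = "R i", OF _ _ rel]) auto
  then have "\<forall>t<r. x k * V k t + x (k + 1) * V (k + 1) t = 0"
    using rel by simp
  then have "x k = 0" "x (k + 1) = 0"
    using coeff_zero_if_not_parallel[OF nonzero not_parallel] by blast+
  moreover obtain b where "b < k + 2" "x b \<noteq> 0"
    using x by blast
  moreover have "b < k \<or> b = k \<or> b = k + 1"
    using \<open>b < k + 2\<close> by linarith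
  ultimately show False
    using x_diag by auto
qed

lemma psd_factorization_ge_block_size:
  fixes M :: "nat \<Rightarrow> nat \<Rightarrow> real"
  assumes F: "psd_factorization r (k + 2) (k + 2) M"
    and diag: "\<forall>i\<le>k. 0 < M i i"
    and off_diag: "\<forall>i<k. \<forall>j<k + 2. j \<noteq> i \<longrightarrow> M i j = 0"
    and nonsing: "M k k * M (k + 1) (k + 1) \<noteq> M k (k + 1) * M (k + 1) k"
  shows "k + 2 \<le> r"
proof -
  obtain R and K :: "nat \<Rightarrow> nat" and G where R: "\<forall>i<k + 2. psd_mat r (R i)"
    and M: "\<forall>i<k + 2. \<forall>j<k + 2. M i j = (\<Sum>l<K j. bilin_form r (R i) (G j l) (G j l))"
    by (rule psd_factorization_rank_oneE[OF F])
  have annihilate: "\<forall>t<r. mat_vec r (R i) (G j l) t = 0"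
    if "i < k" "j < k + 2" "j \<noteq> i" "l < K j" for i j l
  proof -
    have "(\<Sum>l<K j. bilin_form r (R i) (G j l) (G j l)) = 0"
      using M off_diag that by simp
    then show ?thesis
      using psd_mat_sum_quad_zero_imp_mat_vec_zero R that by simp
  qed
  have "\<forall>i\<le>k. \<exists>l<K i. 0 < bilin_form r (R i) (G i l) (G i l)"
    using M diag by (metis (no_types, lifting) add_2_eq_Suc' le_imp_less_Suc less_SucI
        lessThan_iff not_le sum_nonpos)
  then obtain u where u: "\<forall>i\<le>k. u i < K i \<and> 0 < bilin_form r (R i) (G i (u i)) (G i (u i))"
    by metis
  have "\<forall>h\<in>{k, k + 1}. \<forall>q\<in>{k, k + 1}. M h q = (\<Sum>l<K q. bilin_form r (R h) (G q l) (G q l))"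
    using M by simp
  then obtain j0 l0 where j0: "j0 \<in> {k, k + 1}" "l0 < K j0"
    and not_parallel: "\<not> (\<exists>c. \<forall>t<r. G j0 l0 t = c * G k (u k) t)"
    using nonsing by (rule rank_one_columns_not_parallelE)
  define V where "V b = (if b \<le> k then G b (u b) else G j0 l0)" for b
  show ?thesis
  proof (rule independent_witnesses_dim_ge[where R = R and V = V])
    show "\<forall>i<k. 0 < bilin_form r (R i) (V i) (V i)"
      using u by (simp add: V_def)
    show "\<forall>i<k. \<forall>b<k + 2. b \<noteq> i \<longrightarrow> (\<forall>t<r. mat_vec r (R i) (V b) t = 0)"
      using annihilate u j0 by (auto simp: V_def)
    show "\<exists>t<r. V k t \<noteq> 0"
      using bilin_form_pos_imp_nonzero[of r "R k" "G k (u k)"] u by (simp add: V_def)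
    show "\<not> (\<exists>c. \<forall>t<r. V (k + 1) t = c * V k t)"
      using not_parallel by (simp add: V_def)
  qed
qed

theorem lemma4:
  fixes p :: real
  assumes "0 < p" and "p \<le> 1"
  shows "psd_rank 7 7 (M7 p) = 7"
  unfolding psd_rank_def
proof (rule Least_equality)
  show "psd_factorization 7 7 7 (M7 p)"
    using assms by (intro psd_factorization_of_nonneg) (auto simp: M7_def)
next
  fix r assume F: "psd_factorization r 7 7 (M7 p)"
  have "M7 p 5 5 * M7 p 6 6 \<noteq> M7 p 5 6 * M7 p 6 5"
    using assms by (simp add: M7_def algebra_simps)
  then show "7 \<le> r"
    using psd_factorization_ge_block_size[where k = 5 and M = "M7 p"] F assms
    by (simp add: M7_def)
qed

end
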